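(* Let $X$ be a real Banach space with a normalized Schauder basis $\mathcal B=(e_n)_{n=1}^\infty$ with biorthogonal functionals $(e_n^* )$, and let $\mathcal E=(\varepsilon_n)_{n=1}^\infty$ be a sequence of nonnegative numbers such that the brick $K=K_{\mathcal B,\mathcal E}$ is compact. Then $r^{\rm ext}(K)$, $r^{\rm unc}(K)$ and $\sup_{x\in K}\|x\|$ are all finite and equal.
   Context: The brick is $K_{\mathcal B,\mathcal E}=\{x\in X:\ |e_n^*(x)|\le\varepsilon_n \text{ for all } n\}$. A point $x_0\in A$ is an extreme point of $A$ if for every nonzero $x\in X$ there is $\lambda\in[-1,1]$ with $x_0+\lambda x\notin A$. The extreme radius $r^{\rm ext}(K)$ is the supremum of $\|x_0\|$ over extreme points of $K$ if one exists, and $\infty$ otherwise. The unconditional radius is $r^{\rm unc}(K)=\sup_{\theta_n=\pm1}\|\sum_{n=1}^\infty\theta_n\varepsilon_ne_n\|$, with the norm of a divergent series equal to $\infty$. *)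

theory Defs
  imports "HOL-Analysis.Analysis"
begin

text \<open>Schauder basis of a real Banach space: every x has a unique expansion
  x = sum_n c_n e_n (norm-convergent series). Indexing starts at 0.\<close>
definition schauder_basis :: "(nat \<Rightarrow> 'a::banach) \<Rightarrow> bool" where
  "schauder_basis e \<longleftrightarrow> (\<forall>x. \<exists>!c::nat \<Rightarrow> real. (\<lambda>n. c n *\<^sub>R e n) sums x)"

definition coord :: "(nat \<Rightarrow> 'a::banach) \<Rightarrow> nat \<Rightarrow> 'a \<Rightarrow> real" where
  "coord e n x = (THE c::nat \<Rightarrow> real. (\<lambda>k. c k *\<^sub>R e k) sums x) n"

definition brick :: "(nat \<Rightarrow> 'a::banach) \<Rightarrow> (nat \<Rightarrow> real) \<Rightarrow> 'a set" where
  "brick e eps = {x. \<forall>n. \<bar>coord e n x\<bar> \<le> eps n}"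

definition extreme_pt :: "'a::real_vector set \<Rightarrow> 'a \<Rightarrow> bool" where
  "extreme_pt A x0 \<longleftrightarrow> x0 \<in> A \<and>
     (\<forall>x. x \<noteq> 0 \<longrightarrow> (\<exists>l::real. l \<in> {-1..1} \<and> x0 + l *\<^sub>R x \<notin> A))"

definition r_ext :: "'a::real_normed_vector set \<Rightarrow> ereal" where
  "r_ext A = (if \<exists>x. extreme_pt A x
              then (SUP x\<in>{x. extreme_pt A x}. ereal (norm x)) else \<infinity>)"

definition r_unc :: "(nat \<Rightarrow> 'a::banach) \<Rightarrow> (nat \<Rightarrow> real) \<Rightarrow> ereal" where
  "r_unc e eps = (SUP \<theta>\<in>{\<theta>::nat \<Rightarrow> real. \<forall>n. \<theta> n = 1 \<or> \<theta> n = -1}.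
      (if summable (\<lambda>n. (\<theta> n * eps n) *\<^sub>R e n)
       then ereal (norm (\<Sum>n. (\<theta> n * eps n) *\<^sub>R e n)) else \<infinity>))"

end

theory Submission
  imports Defs
begin

text \<open>Compactness of the brick forces every series \<open>\<Sum> c\<^sub>n e\<^sub>n\<close> with \<open>\<bar>c\<^sub>n\<bar> \<le> \<epsilon>\<^sub>n\<close> to
  converge, since all its finite subsums lie in the brick. Hence the extreme points of the brick
  are exactly the sign series \<open>\<Sum> \<theta>\<^sub>n \<epsilon>\<^sub>n e\<^sub>n\<close>, so \<open>r\<^sup>e\<^sup>x\<^sup>t\<close> and \<open>r\<^sup>u\<^sup>n\<^sup>c\<close> are the same
  supremum. Conversely every point of the brick is a limit of points whose coordinates are
  \<open>\<plusminus>\<epsilon>\<^sub>n\<close> except for finitely many, and these are iterated convex combinations of sign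
  series, so by convexity of the norm the supremum over the brick is no larger. It is finite
  because the brick is compact.\<close>

lemma not_summable_disjoint_blocks:
  fixes f :: "nat \<Rightarrow> 'a::banach"
  assumes "\<not> summable f"
  obtains \<delta> and B :: "nat \<Rightarrow> nat set" where "\<delta> > 0" "\<And>k. finite (B k)" "disjoint_family B"
    "\<And>k. \<delta> \<le> norm (sum f (B k))"
proof -
  from assms obtain \<delta> where \<delta>: "\<delta> > 0" "\<forall>N. \<exists>m\<ge>N. \<exists>n. \<delta> \<le> norm (sum f {m..<n})"
    unfolding summable_Cauchy by (auto simp: not_less)
  then obtain lo hi where block: "\<And>N. N \<le> lo N \<and> \<delta> \<le> norm (sum f {lo N..<hi N})"
    by metis
  have lo_less_hi: "lo N < hi N" for N
    using block[of N] \<delta>(1) by (cases "lo N < hi N") auto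
  define t where "t k = (hi ^^ k) 0" for k
  have t_Suc: "t (Suc k) = hi (t k)" for k
    by (simp add: t_def)
  have "strict_mono t"
    unfolding strict_mono_Suc_iff t_Suc using block lo_less_hi by (metis le_less_trans)
  define B where "B k = {lo (t k)..<hi (t k)}" for k
  have B_between: "B k \<subseteq> {t k..<t (Suc k)}" for k
    unfolding B_def t_Suc using block[of "t k"] by auto
  have "B k \<inter> B k' = {}" if "k < k'" for k k'
  proof -
    have "t (Suc k) \<le> t k'"
      using \<open>strict_mono t\<close> that by (simp add: strict_mono_less_eq Suc_leI)
    then show ?thesis
      using B_between[of k] B_between[of k'] by fastforce
  qed
  then have "disjoint_family B"
    unfolding disjoint_family_on_def by (metis Int_commute linorder_neqE_nat)
  moreover have "\<delta> \<le> norm (sum f (B k))" for k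
    unfolding B_def using block by blast
  moreover have "finite (B k)" for k
    by (simp add: B_def)
  ultimately show thesis
    using that \<delta>(1) by blast
qed

text \<open>If the partial sums of \<open>f\<close> were not Cauchy, there would be disjoint blocks
  \<open>u\<^sub>k\<close> with \<open>\<parallel>u\<^sub>k\<parallel> \<ge> \<delta>\<close>. A subsequence converges to some \<open>l\<close> with \<open>\<parallel>l\<parallel> \<ge> \<delta>\<close>,
  and the sum of \<open>m\<close> of its terms, again a finite subsum, tends to \<open>m l\<close>, which
  eventually leaves the bounded set \<open>K\<close>.\<close>
lemma summable_if_finite_subsums_in_compact:
  fixes f :: "nat \<Rightarrow> 'a::banach"
  assumes "compact K" and subsums: "\<And>F. finite F \<Longrightarrow> sum f F \<in> K"
  shows "summable f"
proof (rule ccontr)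
  assume "\<not> summable f"
  obtain \<delta> and B :: "nat \<Rightarrow> nat set" where \<delta>: "\<delta> > 0" and fin: "\<And>k. finite (B k)" and disj: "disjoint_family B"
    and big: "\<And>k. \<delta> \<le> norm (sum f (B k))"
    using not_summable_disjoint_blocks[OF \<open>\<not> summable f\<close>] by blast
  obtain R where R: "\<And>x. x \<in> K \<Longrightarrow> norm x \<le> R"
    using compact_imp_bounded[OF \<open>compact K\<close>] unfolding bounded_iff by blast
  define u where "u k = sum f (B k)" for k
  obtain l r where "strict_mono r" and lim: "(u \<circ> r) \<longlonglongrightarrow> l"
    using compact_imp_seq_compact[OF \<open>compact K\<close>] subsums[OF fin]
    unfolding seq_compact_def u_def by metis
  have "\<delta> \<le> norm l"
    using LIMSEQ_le_const[OF tendsto_norm[OF lim], of \<delta>] big by (auto simp: u_def)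
  obtain m :: nat where m: "R < real m * \<delta>"
    using ex_less_of_nat_mult[OF \<delta>] by blast
  define g where "g j = (\<Sum>i<m. u (r (j + i)))" for j
  have "norm (g j) \<le> R" for j
  proof -
    have "r (j + i) \<noteq> r (j + i')" if "i \<noteq> i'" for i i'
      using strict_mono_eq[OF \<open>strict_mono r\<close>] that by simp
    then have "g j = sum f (\<Union>i<m. B (r (j + i)))"
      unfolding g_def u_def
      by (intro sum.UNION_disjoint[symmetric]) (simp_all add: fin disjoint_family_onD[OF disj])
    then show ?thesis
      using R subsums fin by auto
  qed
  moreover have "g \<longlonglongrightarrow> real m *\<^sub>R l"
  proof -
    have "(\<lambda>j. u (r (j + i))) \<longlonglongrightarrow> l" for i
      using LIMSEQ_ignore_initial_segment[OF lim, of i] by (simp add: o_def add.commute)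
    then have "g \<longlonglongrightarrow> (\<Sum>i<m. l)"
      unfolding g_def by (rule tendsto_sum)
    then show ?thesis
      by (simp add: sum_constant_scaleR)
  qed
  ultimately have "norm (real m *\<^sub>R l) \<le> R"
    using LIMSEQ_le_const2[OF tendsto_norm] by blast
  moreover have "real m * \<delta> \<le> norm (real m *\<^sub>R l)"
    using \<open>\<delta> \<le> norm l\<close> by (simp add: mult_left_mono)
  ultimately show False
    using m by simp
qed

lemma coord_sums:
  assumes "schauder_basis e"
  shows "(\<lambda>n. coord e n x *\<^sub>R e n) sums x"
proof -
  have "\<exists>!c. (\<lambda>n. c n *\<^sub>R e n) sums x"
    using assms unfolding schauder_basis_def by blast
  then show ?thesis
    unfolding coord_def by (rule theI')
qed

lemma coord_unique:
  assumes "schauder_basis e" and "(\<lambda>n. c n *\<^sub>R e n) sums x"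
  shows "coord e n x = c n"
proof -
  have "\<exists>!c. (\<lambda>n. c n *\<^sub>R e n) sums x"
    using assms(1) unfolding schauder_basis_def by blast
  then have "(THE c. (\<lambda>n. c n *\<^sub>R e n) sums x) = c"
    using assms(2) by (rule the1_equality[where P = "\<lambda>c. (\<lambda>n. c n *\<^sub>R e n) sums x"])
  then show ?thesis
    unfolding coord_def by simp
qed

lemma coord_suminf:
  assumes "schauder_basis e" and "summable (\<lambda>n. c n *\<^sub>R e n)"
  shows "coord e n (\<Sum>k. c k *\<^sub>R e k) = c n"
  using coord_unique[OF assms(1) summable_sums[OF assms(2)]] .

lemma coord_sum:
  assumes "schauder_basis e" and "finite F"
  shows "coord e n (\<Sum>k\<in>F. c k *\<^sub>R e k) = (if n \<in> F then c n else 0)"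
proof (rule coord_unique[OF assms(1)])
  have "(\<lambda>k. (if k \<in> F then c k else 0) *\<^sub>R e k) = (\<lambda>k. if k \<in> F then c k *\<^sub>R e k else 0)"
    by auto
  then show "(\<lambda>k. (if k \<in> F then c k else 0) *\<^sub>R e k) sums (\<Sum>k\<in>F. c k *\<^sub>R e k)"
    using sums_If_finite_set[OF assms(2)] by simp
qed

lemma coord_basis:
  assumes "schauder_basis e"
  shows "coord e k (e n) = (if k = n then 1 else 0)"
  using coord_sum[OF assms, of "{n}" k "\<lambda>_. 1"] by simp

lemma coord_zero:
  assumes "schauder_basis e"
  shows "coord e n 0 = 0"
  using coord_sum[OF assms, of "{}"] by simp

lemma coord_add_scaleR:
  assumes "schauder_basis e"
  shows "coord e n (x + a *\<^sub>R y) = coord e n x + a * coord e n y"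
proof (rule coord_unique[OF assms])
  show "(\<lambda>k. (coord e k x + a * coord e k y) *\<^sub>R e k) sums (x + a *\<^sub>R y)"
    using sums_add[OF coord_sums[OF assms] sums_scaleR_right[OF coord_sums[OF assms]]]
    by (simp add: algebra_simps)
qed

lemma coord_eq_0_imp_eq_0:
  assumes "schauder_basis e" and "\<And>n. coord e n x = 0"
  shows "x = 0"
  using sums_unique2[OF coord_sums[OF assms(1), of x]] assms(2) by simp

definition sign_vectors :: "(nat \<Rightarrow> real) set" where
  "sign_vectors = {\<theta>. \<forall>n. \<theta> n = 1 \<or> \<theta> n = -1}"

definition sign_series :: "(nat \<Rightarrow> 'a::banach) \<Rightarrow> (nat \<Rightarrow> real) \<Rightarrow> (nat \<Rightarrow> real) \<Rightarrow> 'a" where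
  "sign_series e eps \<theta> = (\<Sum>n. (\<theta> n * eps n) *\<^sub>R e n)"

lemma abs_sign_vector_mult:
  assumes "\<theta> \<in> sign_vectors" and "eps n \<ge> 0"
  shows "\<bar>\<theta> n * eps n\<bar> = eps n"
  using assms unfolding sign_vectors_def by (cases "\<theta> n = 1") auto

lemma sign_vector_if_abs_eq:
  assumes "\<And>n. \<bar>c n\<bar> = eps n"
  obtains \<theta> where "\<theta> \<in> sign_vectors" and "c = (\<lambda>n. \<theta> n * eps n)"
proof
  show "(\<lambda>n. if c n \<ge> 0 then 1 else -1) \<in> sign_vectors"
    by (simp add: sign_vectors_def)
  show "c = (\<lambda>n. (if c n \<ge> 0 then 1 else -1) * eps n)"
  proof
    fix n
    show "c n = (if c n \<ge> 0 then 1 else -1) * eps n"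
      using assms[of n] by (cases "c n \<ge> 0") auto
  qed
qed

lemma sum_in_brick:
  assumes "schauder_basis e" and "finite F" and "\<And>n. n \<in> F \<Longrightarrow> \<bar>c n\<bar> \<le> eps n"
    and "\<And>n. eps n \<ge> 0"
  shows "(\<Sum>n\<in>F. c n *\<^sub>R e n) \<in> brick e eps"
  using assms unfolding brick_def by (simp add: coord_sum)

lemma brick_series_summable:
  fixes e :: "nat \<Rightarrow> 'a::banach"
  assumes "schauder_basis e" and "\<And>n. eps n \<ge> 0" and "compact (brick e eps)"
    and "\<And>n. \<bar>c n\<bar> \<le> eps n"
  shows "summable (\<lambda>n. c n *\<^sub>R e n)"
  using assms by (intro summable_if_finite_subsums_in_compact[of "brick e eps"] sum_in_brick)

lemma extreme_pt_brick_iff: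
  assumes "schauder_basis e"
  shows "extreme_pt (brick e eps) x \<longleftrightarrow> (\<forall>n. \<bar>coord e n x\<bar> = eps n)"
proof
  assume extreme: "extreme_pt (brick e eps) x"
  then have bounds: "\<bar>coord e k x\<bar> \<le> eps k" for k
    unfolding extreme_pt_def brick_def by blast
  show "\<forall>n. \<bar>coord e n x\<bar> = eps n"
  proof (rule ccontr)
    assume "\<not> (\<forall>n. \<bar>coord e n x\<bar> = eps n)"
    then obtain n where "\<bar>coord e n x\<bar> < eps n"
      using bounds less_eq_real_def by blast
    define \<delta> where "\<delta> = eps n - \<bar>coord e n x\<bar>"
    have "\<delta> > 0"
      using \<open>\<bar>coord e n x\<bar> < eps n\<close> by (simp add: \<delta>_def)
    moreover have "e n \<noteq> 0"
      using coord_basis[OF assms, of n n] coord_zero[OF assms, of n] by auto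
    ultimately have "\<delta> *\<^sub>R e n \<noteq> 0"
      by simp
    then obtain l :: real where "l \<in> {-1..1}" and outside: "x + l *\<^sub>R (\<delta> *\<^sub>R e n) \<notin> brick e eps"
      using extreme unfolding extreme_pt_def by blast
    then have "\<bar>l\<bar> \<le> 1"
      by auto
    have "\<bar>l * \<delta>\<bar> \<le> \<delta>"
      using \<open>\<bar>l\<bar> \<le> 1\<close> \<open>\<delta> > 0\<close> by (simp add: abs_mult mult_left_le_one_le)
    then have "\<bar>coord e n x + l * \<delta>\<bar> \<le> eps n"
      using abs_triangle_ineq[of "coord e n x" "l * \<delta>"] unfolding \<delta>_def by linarith
    then have "x + l *\<^sub>R (\<delta> *\<^sub>R e n) \<in> brick e eps"
      using bounds by (auto simp: brick_def coord_add_scaleR[OF assms] coord_basis[OF assms])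
    with outside show False ..
  qed
next
  assume vertex: "\<forall>n. \<bar>coord e n x\<bar> = eps n"
  show "extreme_pt (brick e eps) x"
    unfolding extreme_pt_def
  proof (intro conjI allI impI)
    show "x \<in> brick e eps"
      using vertex by (simp add: brick_def)
    fix y :: 'a assume "y \<noteq> 0"
    then obtain n where "coord e n y \<noteq> 0"
      using coord_eq_0_imp_eq_0[OF assms] by blast
    \<comment> \<open>moving along \<open>y\<close> in the direction that enlarges \<open>\<bar>coord e n x\<bar>\<close> leaves the brick\<close>
    define l :: real where "l = (if coord e n x * coord e n y \<ge> 0 then 1 else -1)"
    have "\<bar>coord e n x + l * coord e n y\<bar> = \<bar>coord e n x\<bar> + \<bar>coord e n y\<bar>"
      unfolding l_def by (auto simp: abs_if zero_le_mult_iff mult_le_0_iff)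
    moreover have "\<bar>coord e n y\<bar> > 0"
      using \<open>coord e n y \<noteq> 0\<close> by simp
    ultimately have "\<not> \<bar>coord e n (x + l *\<^sub>R y)\<bar> \<le> eps n"
      using vertex[rule_format, of n] unfolding coord_add_scaleR[OF assms] by linarith
    then have "x + l *\<^sub>R y \<notin> brick e eps"
      unfolding brick_def by blast
    moreover have "l \<in> {-1..1}"
      by (simp add: l_def)
    ultimately show "\<exists>l. l \<in> {-1..1} \<and> x + l *\<^sub>R y \<notin> brick e eps"
      by blast
  qed
qed

lemma convex_combination_of_bounds:
  fixes c \<epsilon> :: real
  assumes "\<bar>c\<bar> \<le> \<epsilon>"
  obtains a b where "a \<ge> 0" and "b \<ge> 0" and "a + b = 1" and "c = a * \<epsilon> + b * - \<epsilon>"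
proof (cases "\<epsilon> = 0")
  case True
  then show thesis
    using assms that[of 1 0] by simp
next
  case False
  then have "\<epsilon> > 0"
    using assms by linarith
  have "0 \<le> \<epsilon> + c" "0 \<le> \<epsilon> - c"
    using assms by (simp_all add: abs_le_iff)
  then have "0 \<le> (\<epsilon> + c) / (2 * \<epsilon>)" "0 \<le> (\<epsilon> - c) / (2 * \<epsilon>)"
    using \<open>\<epsilon> > 0\<close> by simp_all
  moreover have "(\<epsilon> + c) / (2 * \<epsilon>) + (\<epsilon> - c) / (2 * \<epsilon>) = 1"
    using \<open>\<epsilon> > 0\<close> by (simp add: field_simps)
  moreover have "c = (\<epsilon> + c) / (2 * \<epsilon>) * \<epsilon> + (\<epsilon> - c) / (2 * \<epsilon>) * - \<epsilon>"
    using \<open>\<epsilon> > 0\<close> by (simp add: field_simps)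
  ultimately show thesis
    by (rule that)
qed

lemma norm_suminf_le_if_tail_signs:
  fixes e :: "nat \<Rightarrow> 'a::banach"
  assumes eps_nonneg: "\<And>n. eps n \<ge> 0"
    and summable: "\<And>c. (\<And>n. \<bar>c n\<bar> \<le> eps n) \<Longrightarrow> summable (\<lambda>n. c n *\<^sub>R e n)"
    and signs: "\<And>\<theta>. \<theta> \<in> sign_vectors \<Longrightarrow> norm (sign_series e eps \<theta>) \<le> M"
    and "\<And>n. \<bar>c n\<bar> \<le> eps n" and "\<And>n. N \<le> n \<Longrightarrow> \<bar>c n\<bar> = eps n"
  shows "norm (\<Sum>n. c n *\<^sub>R e n) \<le> M"
  using assms(4,5)
proof (induction N arbitrary: c)
  case 0
  then have "\<bar>c n\<bar> = eps n" for n
    by simp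
  then obtain \<theta> where "\<theta> \<in> sign_vectors" and "c = (\<lambda>n. \<theta> n * eps n)"
    by (rule sign_vector_if_abs_eq)
  then show ?case
    using signs by (simp add: sign_series_def)
next
  case (Suc N)
  \<comment> \<open>\<open>c\<close> is a convex combination of the two vectors with \<open>c N\<close> replaced by \<open>\<plusminus>eps N\<close>\<close>
  have IH: "norm (\<Sum>n. (c(N := d)) n *\<^sub>R e n) \<le> M" "summable (\<lambda>n. (c(N := d)) n *\<^sub>R e n)"
    if "\<bar>d\<bar> = eps N" for d
  proof -
    have bounds: "\<bar>(c(N := d)) n\<bar> \<le> eps n" for n
      using Suc.prems(1)[of n] that by simp
    moreover have "\<bar>(c(N := d)) n\<bar> = eps n" if "N \<le> n" for n
      using Suc.prems(2)[of n] \<open>\<bar>d\<bar> = eps N\<close> that by (cases "n = N") simp_all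
    ultimately show "norm (\<Sum>n. (c(N := d)) n *\<^sub>R e n) \<le> M"
      by (rule Suc.IH)
    show "summable (\<lambda>n. (c(N := d)) n *\<^sub>R e n)"
      using bounds by (rule summable)
  qed
  define Sp where "Sp = (\<Sum>n. (c(N := eps N)) n *\<^sub>R e n)"
  define Sm where "Sm = (\<Sum>n. (c(N := - eps N)) n *\<^sub>R e n)"
  obtain a b where "a \<ge> 0" "b \<ge> 0" "a + b = 1" and c_N: "c N = a * eps N + b * - eps N"
    using convex_combination_of_bounds Suc.prems(1) by blast
  have "c n *\<^sub>R e n = a *\<^sub>R ((c(N := eps N)) n *\<^sub>R e n) + b *\<^sub>R ((c(N := - eps N)) n *\<^sub>R e n)" for n
  proof (cases "n = N")
    case True
    then show ?thesis
      using c_N by (simp add: scaleR_diff_left)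
  next
    case False
    then show ?thesis
      using \<open>a + b = 1\<close> by (simp flip: scaleR_add_left distrib_right)
  qed
  moreover have "(\<lambda>n. a *\<^sub>R ((c(N := eps N)) n *\<^sub>R e n) + b *\<^sub>R ((c(N := - eps N)) n *\<^sub>R e n))
      sums (a *\<^sub>R Sp + b *\<^sub>R Sm)"
    unfolding Sp_def Sm_def using IH(2)[of "eps N"] IH(2)[of "- eps N"] eps_nonneg[of N]
    by (intro sums_add sums_scaleR_right summable_sums) simp_all
  ultimately have "(\<Sum>n. c n *\<^sub>R e n) = a *\<^sub>R Sp + b *\<^sub>R Sm"
    by (simp add: sums_iff)
  also have "norm \<dots> \<le> a * norm Sp + b * norm Sm"
    using norm_triangle_ineq[of "a *\<^sub>R Sp" "b *\<^sub>R Sm"] \<open>a \<ge> 0\<close> \<open>b \<ge> 0\<close> by simp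
  also have "\<dots> \<le> a * M + b * M"
    unfolding Sp_def Sm_def using IH(1) eps_nonneg[of N] \<open>a \<ge> 0\<close> \<open>b \<ge> 0\<close>
    by (intro add_mono mult_left_mono) simp_all
  also have "\<dots> = M"
    using \<open>a + b = 1\<close> by (simp flip: distrib_right)
  finally show ?case .
qed

text \<open>Keeping the first \<open>N\<close> coordinates of \<open>x\<close> and replacing the others by \<open>eps\<close> gives
  vectors to which \<open>norm_suminf_le_if_tail_signs\<close> applies and which converge to \<open>x\<close>.\<close>
lemma norm_le_if_in_brick:
  fixes e :: "nat \<Rightarrow> 'a::banach"
  assumes basis: "schauder_basis e" and eps_nonneg: "\<And>n. eps n \<ge> 0"
    and summable: "\<And>c. (\<And>n. \<bar>c n\<bar> \<le> eps n) \<Longrightarrow> summable (\<lambda>n. c n *\<^sub>R e n)"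
    and signs: "\<And>\<theta>. \<theta> \<in> sign_vectors \<Longrightarrow> norm (sign_series e eps \<theta>) \<le> M"
    and "x \<in> brick e eps"
  shows "norm x \<le> M"
proof -
  define s where "s = (\<Sum>n. eps n *\<^sub>R e n)"
  have "summable (\<lambda>n. eps n *\<^sub>R e n)"
    using summable eps_nonneg by simp
  then have s: "(\<lambda>n. eps n *\<^sub>R e n) sums s"
    by (simp add: s_def summable_sums)
  define c where "c N n = (if n < N then coord e n x else eps n)" for N n
  have "(\<Sum>n. c N n *\<^sub>R e n) = s + (\<Sum>n<N. coord e n x *\<^sub>R e n) - (\<Sum>n<N. eps n *\<^sub>R e n)" for N
  proof -
    have "(\<lambda>n. c N n *\<^sub>R e n)
        = (\<lambda>n. eps n *\<^sub>R e n + (if n \<in> {..<N} then (coord e n x - eps n) *\<^sub>R e n else 0))"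
      by (auto simp: c_def fun_eq_iff scaleR_diff_left)
    moreover have "\<dots> sums (s + (\<Sum>n<N. (coord e n x - eps n) *\<^sub>R e n))"
      by (intro sums_add s sums_If_finite_set) simp
    ultimately show ?thesis
      by (simp add: sums_iff scaleR_diff_left sum_subtractf)
  qed
  moreover have "(\<lambda>N. s + (\<Sum>n<N. coord e n x *\<^sub>R e n) - (\<Sum>n<N. eps n *\<^sub>R e n)) \<longlonglongrightarrow> s + x - s"
    using coord_sums[OF basis, of x] s unfolding sums_def by (intro tendsto_intros)
  ultimately have "(\<lambda>N. \<Sum>n. c N n *\<^sub>R e n) \<longlonglongrightarrow> x"
    by simp
  moreover have "norm (\<Sum>n. c N n *\<^sub>R e n) \<le> M" for N
    using \<open>x \<in> brick e eps\<close> eps_nonneg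
    by (intro norm_suminf_le_if_tail_signs[OF eps_nonneg summable signs, where N = N])
      (auto simp: c_def brick_def)
  ultimately show ?thesis
    using LIMSEQ_le_const2[OF tendsto_norm] by blast
qed

lemma abs_coord_sign_series:
  assumes "schauder_basis e" and "\<And>n. eps n \<ge> 0"
    and "\<And>c. (\<And>n. \<bar>c n\<bar> \<le> eps n) \<Longrightarrow> summable (\<lambda>n. c n *\<^sub>R e n)"
    and "\<theta> \<in> sign_vectors"
  shows "\<forall>n. \<bar>coord e n (sign_series e eps \<theta>)\<bar> = eps n"
  using assms by (simp add: sign_series_def coord_suminf abs_sign_vector_mult)

lemma extreme_points_brick:
  assumes basis: "schauder_basis e" and eps_nonneg: "\<And>n. eps n \<ge> 0"
    and summable: "\<And>c. (\<And>n. \<bar>c n\<bar> \<le> eps n) \<Longrightarrow> summable (\<lambda>n. c n *\<^sub>R e n)"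
  shows "{x. extreme_pt (brick e eps) x} = sign_series e eps ` sign_vectors"
proof (intro equalityI subsetI)
  fix x assume "x \<in> {x. extreme_pt (brick e eps) x}"
  then have "\<And>n. \<bar>coord e n x\<bar> = eps n"
    using extreme_pt_brick_iff[OF basis] by simp
  then obtain \<theta> where "\<theta> \<in> sign_vectors" and coords: "(\<lambda>n. coord e n x) = (\<lambda>n. \<theta> n * eps n)"
    by (rule sign_vector_if_abs_eq)
  have "x = sign_series e eps \<theta>"
    using sums_unique[OF coord_sums[OF basis, of x]] coords[unfolded fun_eq_iff]
    by (simp add: sign_series_def)
  with \<open>\<theta> \<in> sign_vectors\<close> show "x \<in> sign_series e eps ` sign_vectors"
    by blast
next
  fix x assume "x \<in> sign_series e eps ` sign_vectors"
  then obtain \<theta> where "\<theta> \<in> sign_vectors" and "x = sign_series e eps \<theta>"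
    by blast
  then show "x \<in> {x. extreme_pt (brick e eps) x}"
    using abs_coord_sign_series[where e = e and eps = eps, OF assms] extreme_pt_brick_iff[OF basis]
    by simp
qed

lemma r_ext_brick_eq_SUP_sign_series:
  assumes "schauder_basis e" and "\<And>n. eps n \<ge> 0"
    and "\<And>c. (\<And>n. \<bar>c n\<bar> \<le> eps n) \<Longrightarrow> summable (\<lambda>n. c n *\<^sub>R e n)"
  shows "r_ext (brick e eps) = (SUP \<theta>\<in>sign_vectors. ereal (norm (sign_series e eps \<theta>)))"
proof -
  have "(\<lambda>_. 1) \<in> sign_vectors"
    by (simp add: sign_vectors_def)
  then have "\<exists>x. extreme_pt (brick e eps) x"
    using extreme_points_brick[where e = e and eps = eps, OF assms] by blast
  then show ?thesis
    using extreme_points_brick[where e = e and eps = eps, OF assms]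
    unfolding r_ext_def by (simp add: image_comp)
qed

lemma r_unc_eq_SUP_sign_series:
  assumes "\<And>n. eps n \<ge> 0"
    and "\<And>c. (\<And>n. \<bar>c n\<bar> \<le> eps n) \<Longrightarrow> summable (\<lambda>n. c n *\<^sub>R e n)"
  shows "r_unc e eps = (SUP \<theta>\<in>sign_vectors. ereal (norm (sign_series e eps \<theta>)))"
  unfolding r_unc_def sign_vectors_def[symmetric] sign_series_def
  using assms abs_sign_vector_mult by (intro SUP_cong) auto

lemma SUP_norm_brick_eq_SUP_sign_series:
  assumes "schauder_basis e" and "\<And>n. eps n \<ge> 0"
    and "\<And>c. (\<And>n. \<bar>c n\<bar> \<le> eps n) \<Longrightarrow> summable (\<lambda>n. c n *\<^sub>R e n)"
  shows "(SUP x\<in>brick e eps. ereal (norm x))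
    = (SUP \<theta>\<in>sign_vectors. ereal (norm (sign_series e eps \<theta>)))" (is "_ = ?E")
proof (rule antisym)
  have "sign_series e eps ` sign_vectors \<subseteq> brick e eps"
    using extreme_points_brick[where e = e and eps = eps, OF assms] by (auto simp: extreme_pt_def)
  then have "(SUP x\<in>sign_series e eps ` sign_vectors. ereal (norm x))
      \<le> (SUP x\<in>brick e eps. ereal (norm x))"
    by (rule SUP_subset_mono) simp
  then show "?E \<le> (SUP x\<in>brick e eps. ereal (norm x))"
    by (simp add: image_comp)
  show "(SUP x\<in>brick e eps. ereal (norm x)) \<le> ?E"
  proof (rule SUP_least)
    fix x assume "x \<in> brick e eps"
    have "(\<lambda>_. 1) \<in> sign_vectors"
      by (simp add: sign_vectors_def)
    then have "0 \<le> ?E"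
      by (rule SUP_upper2) simp
    then show "ereal (norm x) \<le> ?E"
    proof (cases ?E)
      case (real M)
      then have "norm (sign_series e eps \<theta>) \<le> M" if "\<theta> \<in> sign_vectors" for \<theta>
        using SUP_upper[OF that, of "\<lambda>\<theta>. ereal (norm (sign_series e eps \<theta>))"] by simp
      then show ?thesis
        using norm_le_if_in_brick[where e = e and eps = eps, OF assms] \<open>x \<in> brick e eps\<close> real by simp
    qed simp_all
  qed
qed

theorem corollary3p8:
  fixes e :: "nat \<Rightarrow> 'a::banach" and eps :: "nat \<Rightarrow> real"
  assumes "schauder_basis e"
    and "\<forall>n. norm (e n) = 1"
    and "\<forall>n. eps n \<ge> 0"
    and "compact (brick e eps)"
  shows "\<exists>r::real. r_ext (brick e eps) = ereal r \<and> r_unc e eps = ereal r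
           \<and> (SUP x\<in>brick e eps. ereal (norm x)) = ereal r"
proof -
  have eps_nonneg: "\<And>n. eps n \<ge> 0"
    using assms(3) by blast
  note summable = brick_series_summable[OF assms(1) eps_nonneg assms(4)]
  note SUP_sign_series =
    r_ext_brick_eq_SUP_sign_series[where e = e and eps = eps, OF assms(1) eps_nonneg summable]
    r_unc_eq_SUP_sign_series[where e = e and eps = eps, OF eps_nonneg summable]
    SUP_norm_brick_eq_SUP_sign_series[where e = e and eps = eps, OF assms(1) eps_nonneg summable]
  obtain R where R: "\<And>x. x \<in> brick e eps \<Longrightarrow> norm x \<le> R"
    using compact_imp_bounded[OF assms(4)] unfolding bounded_iff by blast
  have "0 \<in> brick e eps"
    using eps_nonneg by (simp add: brick_def coord_zero[OF assms(1)])
  then have "0 \<le> (SUP x\<in>brick e eps. ereal (norm x))"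
    by (rule SUP_upper2) simp
  moreover have "(SUP x\<in>brick e eps. ereal (norm x)) \<le> ereal R"
    using R by (simp add: SUP_least)
  ultimately obtain r where "(SUP x\<in>brick e eps. ereal (norm x)) = ereal r"
    by (cases "SUP x\<in>brick e eps. ereal (norm x)") auto
  then show ?thesis
    using SUP_sign_series by auto
qed

end
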